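(* Let $f:\{0,1\}^n\to\{0,1\}$ be symmetric and suppose there is $a\in\{0,1\}^n$ with $1\le|a|\le n-1$ such that $f(x)=f(x+a)$ for all $x\in\{0,1\}^n$. If $|a|$ is odd, then $f$ is constant. If $|a|$ is even, then $f$ is constant, PARITY, or the negation of PARITY.
   Context: $f$ is symmetric if $f(x)$ depends only on the Hamming weight $|x|$. Addition of bit strings is bitwise mod 2. $\mathrm{PARITY}(x)=1$ iff $|x|$ is odd. *)

theory Defs
  imports Main
begin

text \<open>Bit strings in {0,1}^n are boolean lists of length n (True = 1);
  Boolean functions take values in bool (True = 1).\<close>

definition cube :: "nat \<Rightarrow> bool list set" where
  "cube n = {x. length x = n}"

definition hweight :: "bool list \<Rightarrow> nat" where
  "hweight x = length (filter id x)"

definition xadd :: "bool list \<Rightarrow> bool list \<Rightarrow> bool list" where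
  "xadd x y = map2 (\<lambda>a b. a \<noteq> b) x y"

definition PARITY :: "bool list \<Rightarrow> bool" where
  "PARITY x = odd (hweight x)"

definition symmetric_on :: "nat \<Rightarrow> (bool list \<Rightarrow> bool) \<Rightarrow> bool" where
  "symmetric_on n f = (\<forall>x\<in>cube n. \<forall>y\<in>cube n. hweight x = hweight y \<longrightarrow> f x = f y)"

definition constant_on_cube :: "nat \<Rightarrow> (bool list \<Rightarrow> bool) \<Rightarrow> bool" where
  "constant_on_cube n f = (\<exists>c. \<forall>x\<in>cube n. f x = c)"

end

theory Submission
  imports Defs
begin

(* A symmetric f on {0,1}^n is determined by its weight profile
   g(k) = f(1^k 0^(n-k)).  If a has weight w and x agrees with a on exactly i of
   the w one-positions of a and has q ones among the n - w zero-positions of a,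
   then |x| = i + q and |x + a| = (w - i) + q.  Invariance of f under translation
   by a therefore gives the reflection identities g(i + q) = g(w - i + q) for all
   i <= w, q <= n - w.  Comparing (i, q) with (i + 1, q - 1) shows g(m) = g(m + 2)
   whenever 1 <= w <= n - 1, so g only depends on the parity of the weight.  The
   instance i = q = 0 gives g(0) = g(w); for odd w this forces g(0) = g(1), i.e.
   f is constant, while for even w a function depending only on parity is
   constant, PARITY, or its negation. *)

lemma hweight_le_length: "hweight x \<le> length x"
  by (simp add: hweight_def)

definition weight_profile :: "nat \<Rightarrow> (bool list \<Rightarrow> bool) \<Rightarrow> nat \<Rightarrow> bool" where
  "weight_profile n f k = f (replicate k True @ replicate (n - k) False)"

lemma symmetric_on_weight_profile:
  assumes "symmetric_on n f" and "x \<in> cube n"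
  shows "f x = weight_profile n f (hweight x)"
proof -
  define c where "c = replicate (hweight x) True @ replicate (n - hweight x) False"
  have "hweight x \<le> n" using assms(2) hweight_le_length[of x] by (simp add: cube_def)
  then have "c \<in> cube n" and "hweight c = hweight x"
    by (simp_all add: c_def cube_def hweight_def)
  then show ?thesis
    using assms unfolding symmetric_on_def weight_profile_def c_def by blast
qed

fun mixed_string :: "nat \<Rightarrow> nat \<Rightarrow> bool list \<Rightarrow> bool list" where
  "mixed_string i q [] = []"
| "mixed_string i q (True # a) = (i > 0) # mixed_string (i - 1) q a"
| "mixed_string i q (False # a) = (q > 0) # mixed_string i (q - 1) a"

lemma length_mixed_string: "length (mixed_string i q a) = length a"
  by (induction i q a rule: mixed_string.induct) auto

lemma hweight_mixed_string:
  "i \<le> hweight a \<Longrightarrow> q \<le> length a - hweight a \<Longrightarrow>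
   hweight (mixed_string i q a) = i + q"
proof (induction i q a rule: mixed_string.induct)
  case (2 i q a)
  then show ?case using hweight_le_length[of a] by (cases i) (auto simp: hweight_def)
next
  case (3 i q a)
  then show ?case using hweight_le_length[of a] by (cases q) (auto simp: hweight_def)
qed (simp add: hweight_def)

text \<open>Adding a flips the i chosen one-positions off and the remaining w - i on.\<close>

lemma hweight_xadd_mixed_string:
  "i \<le> hweight a \<Longrightarrow> q \<le> length a - hweight a \<Longrightarrow>
   hweight (xadd (mixed_string i q a) a) = (hweight a - i) + q"
proof (induction i q a rule: mixed_string.induct)
  case (2 i q a)
  then show ?case using hweight_le_length[of a] by (cases i) (auto simp: hweight_def xadd_def)
next
  case (3 i q a)
  then show ?case using hweight_le_length[of a] by (cases q) (auto simp: hweight_def xadd_def)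
qed (simp add: hweight_def xadd_def)

lemma weight_profile_reflection:
  assumes sym: "symmetric_on n f" and a: "a \<in> cube n"
    and inv: "\<forall>x\<in>cube n. f x = f (xadd x a)"
    and i: "i \<le> hweight a" and q: "q \<le> n - hweight a"
  shows "weight_profile n f (i + q) = weight_profile n f (hweight a - i + q)"
proof -
  define x where "x = mixed_string i q a"
  have len: "length a = n" using a by (simp add: cube_def)
  have x: "x \<in> cube n" and xa: "xadd x a \<in> cube n"
    using len by (simp_all add: x_def cube_def xadd_def length_mixed_string)
  have "hweight x = i + q" and "hweight (xadd x a) = hweight a - i + q"
    using i q len by (simp_all add: x_def hweight_mixed_string hweight_xadd_mixed_string)
  then show ?thesis
    using inv x xa symmetric_on_weight_profile[OF sym x]
      symmetric_on_weight_profile[OF sym xa] by simp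
qed

text \<open>Reflections about a centre w strictly inside (0, n) generate shifts by two:
  the pairs (i, q) and (i + 1, q - 1) have the same sum but reflected images
  differing by two.\<close>

lemma shift_two_from_reflections:
  fixes g :: "nat \<Rightarrow> 'b"
  assumes w: "1 \<le> w" "w < n"
    and refl: "\<And>i q. i \<le> w \<Longrightarrow> q \<le> n - w \<Longrightarrow> g (i + q) = g (w - i + q)"
    and m: "m + 2 \<le> n"
  shows "g m = g (m + 2)"
proof -
  define q where "q = max 1 (m + 2 - w)"
  define i where "i = w + q - (m + 2)"
  have q_bounds: "1 \<le> q" "q \<le> n - w" "q \<le> m + 1" "m + 2 \<le> w + q"
    using w m by (auto simp: q_def)
  have "g (i + q) = g (m + 2)"
    using refl[of i q] q_bounds by (simp add: i_def)
  moreover have "g (i + 1 + (q - 1)) = g m"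
    using refl[of "i + 1" "q - 1"] q_bounds by (simp add: i_def)
  moreover have "i + 1 + (q - 1) = i + q" using q_bounds by simp
  ultimately show ?thesis by simp
qed

lemma mod_two_from_shift_two:
  fixes g :: "nat \<Rightarrow> 'b"
  assumes shift: "\<And>m. m + 2 \<le> n \<Longrightarrow> g m = g (m + 2)"
  shows "m \<le> n \<Longrightarrow> g m = g (m mod 2)"
proof (induction m rule: less_induct)
  case (less m)
  show ?case
  proof (cases "m < 2")
    case False
    then have "m - 2 + 2 = m" by simp
    then have "g m = g (m - 2)" using shift[of "m - 2"] less.prems by metis
    also have "\<dots> = g ((m - 2) mod 2)" using False less.prems by (intro less.IH) auto
    also have "(m - 2) mod 2 = m mod 2" using \<open>m - 2 + 2 = m\<close> by (metis mod_add_self2)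
    finally show ?thesis .
  qed simp
qed

lemma symmetric_on_parity_profile:
  assumes sym: "symmetric_on n f"
    and parity_only: "\<And>m. m \<le> n \<Longrightarrow> weight_profile n f m = weight_profile n f (m mod 2)"
  shows "\<forall>x\<in>cube n. f x = (if PARITY x then weight_profile n f 1 else weight_profile n f 0)"
proof
  fix x assume x: "x \<in> cube n"
  then have "hweight x \<le> n" using hweight_le_length[of x] by (simp add: cube_def)
  then have "f x = weight_profile n f (hweight x mod 2)"
    using symmetric_on_weight_profile[OF sym x] parity_only[of "hweight x"] by simp
  then show "f x = (if PARITY x then weight_profile n f 1 else weight_profile n f 0)"
    by (simp add: PARITY_def odd_iff_mod_2_eq_one even_iff_mod_2_eq_zero)
qed

lemma parity_determined_cases:
  assumes "\<forall>x\<in>cube n. f x = (if PARITY x then c1 else c0)"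
  shows "constant_on_cube n f \<or> (\<forall>x\<in>cube n. f x = PARITY x)
           \<or> (\<forall>x\<in>cube n. f x = (\<not> PARITY x))"
proof (cases "c0 = c1")
  case True
  then show ?thesis using assms unfolding constant_on_cube_def by auto
next
  case False
  then show ?thesis using assms by (cases c1) auto
qed

theorem lemma7p8:
  fixes n :: nat and f :: "bool list \<Rightarrow> bool" and a :: "bool list"
  assumes sym: "symmetric_on n f"
    and a_cube: "a \<in> cube n"
    and a_low: "1 \<le> hweight a" and a_high: "hweight a \<le> n - 1"
    and inv: "\<forall>x\<in>cube n. f x = f (xadd x a)"
  shows "(odd (hweight a) \<longrightarrow> constant_on_cube n f) \<and>
         (even (hweight a) \<longrightarrow>
            constant_on_cube n f \<or> (\<forall>x\<in>cube n. f x = PARITY x)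
            \<or> (\<forall>x\<in>cube n. f x = (\<not> PARITY x)))"
proof -
  define g where "g = weight_profile n f"
  define w where "w = hweight a"
  have refl: "\<And>i q. i \<le> w \<Longrightarrow> q \<le> n - w \<Longrightarrow> g (i + q) = g (w - i + q)"
    using weight_profile_reflection[OF sym a_cube inv] by (simp add: g_def w_def)
  have w: "1 \<le> w" "w < n" using a_low a_high by (auto simp: w_def)
  have parity_only: "\<And>m. m \<le> n \<Longrightarrow> g m = g (m mod 2)"
    by (rule mod_two_from_shift_two[of n g]) (rule shift_two_from_reflections[OF w refl])
  have by_parity: "\<forall>x\<in>cube n. f x = (if PARITY x then g 1 else g 0)"
    unfolding g_def by (rule symmetric_on_parity_profile[OF sym parity_only[unfolded g_def]])
  have "g 0 = g w" using refl[of 0 0] by simp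
  then have "odd w \<Longrightarrow> g 0 = g 1"
    using parity_only[of w] w by (simp add: odd_iff_mod_2_eq_one)
  then have "odd w \<Longrightarrow> constant_on_cube n f"
    using by_parity unfolding constant_on_cube_def by auto
  then show ?thesis using parity_determined_cases[OF by_parity] by (simp add: w_def)
qed

end
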